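(* Let $\alpha\in(0,1)$, $\gamma,\beta>0$, $\lambda=\beta+\gamma$, $r_0>0$, $Y=B(0,r_0)\subset\mathbb R\oplus\mathbb R^{d-1}$, and $\mathcal X(x)=\|x\|^\alpha Ax$ with $A=\gamma\,\mathrm{Id}_{\mathbb R}\oplus(-\beta\,\mathrm{Id}_{\mathbb R^{d-1}})$, with flow $\varphi_t$. Let $x(t)$ be a trajectory in $Y$ for $t\in[0,T_0]$ and $\theta(t)$ its angle with $\mathbb R\times\{0\}$. Let $v(t)=D\varphi_t(x(0))v(0)$ be a flow-invariant family of tangent vectors along $x$, write $v=v_u+v_s$ with $v_u\in\mathbb R\times\{0\}$, $v_s\in\{0\}\times\mathbb R^{d-1}$, and let $\rho(t)$ be the angle between $v(t)$ and $\mathbb R\times\{0\}$, $\tan\rho=\|v_s\|/\|v_u\|$. Then for $t\in[0,T_0]$, if $\tan\rho(t)\le1$, $$(\tan\rho)'\le-\lambda\|x\|^\alpha\tan\rho+\alpha\lambda\|x\|^\alpha\frac{\tan\theta}{1+\tan^2\theta}.$$ *)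

theory Defs
  imports "HOL-Analysis.Analysis"
begin

text \<open>Ambient space: R (+) R^(d-1), rendered as real \<times> (real^'n) (Euclidean product norm).
  First component: unstable direction; second component: stable directions.\<close>

definition Aop :: "real \<Rightarrow> real \<Rightarrow> real \<times> (real^'n) \<Rightarrow> real \<times> (real^'n)" where
  "Aop \<gamma> \<beta> p = (\<gamma> * fst p, - (\<beta> *\<^sub>R snd p))"

definition Xfield :: "real \<Rightarrow> real \<Rightarrow> real \<Rightarrow> real \<times> (real^'n) \<Rightarrow> real \<times> (real^'n)" where
  "Xfield \<alpha> \<gamma> \<beta> p = (norm p powr \<alpha>) *\<^sub>R Aop \<gamma> \<beta> p"

definition tan_ang :: "real \<times> (real^'n) \<Rightarrow> real" where
  "tan_ang p = norm (snd p) / norm (fst p)"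

end

theory Submission
  imports Defs
begin

text \<open>
  Write \<open>v = (u, S)\<close>, so that \<open>tan \<rho> = \<parallel>S\<parallel> / \<bar>u\<bar>\<close> and
  \<open>(tan \<rho>)' = \<parallel>S\<parallel>' / \<bar>u\<bar> - tan \<rho> \<cdot> u' / u\<close>, where \<open>\<parallel>S\<parallel>'\<close> is the one-sided
  derivative of the norm when \<open>S = 0\<close>. The variational equation gives \<open>v' = DX(x) v\<close> with
  \<open>DX(p) w = \<parallel>p\<parallel>\<^sup>\<alpha> A w + \<alpha> \<parallel>p\<parallel>\<^sup>\<alpha>\<^sup>-\<^sup>2 \<langle>p, w\<rangle> A p\<close>. With \<open>p = (a, b)\<close>, \<open>\<tau> = tan \<rho>\<close> and
  \<open>e = \<langle>S, b\<rangle> sgn u / \<parallel>S\<parallel>\<close>, the first term contributes exactly \<open>-\<lambda> \<parallel>p\<parallel>\<^sup>\<alpha> \<tau>\<close> and the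
  second \<open>-\<alpha> \<parallel>p\<parallel>\<^sup>\<alpha>\<^sup>-\<^sup>2 (a + \<tau> e)(\<beta> e + \<gamma> \<tau> a)\<close>. Expanding the product, its only term
  that can be negative is \<open>a e (\<beta> + \<gamma> \<tau>\<^sup>2)\<close>; as \<open>\<bar>e\<bar> \<le> \<parallel>b\<parallel>\<close> and \<open>\<tau> \<le> 1\<close> it is at least
  \<open>-\<lambda> \<bar>a\<bar> \<parallel>b\<parallel>\<close>, and \<open>\<bar>a\<bar> \<parallel>b\<parallel> / \<parallel>p\<parallel>\<^sup>2 = tan \<theta> / (1 + tan\<^sup>2 \<theta>)\<close>.
\<close>

lemma has_derivative_norm_powr:
  fixes p :: "'a::real_inner"
  assumes "p \<noteq> 0"
  shows "((\<lambda>q. norm q powr \<alpha>) has_derivative (\<lambda>w. \<alpha> * norm p powr \<alpha> / (norm p)\<^sup>2 * (p \<bullet> w))) (at p)"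
proof -
  have "norm p > 0" using assms by simp
  have "((\<lambda>q. norm q powr \<alpha>) has_derivative (\<lambda>w. \<alpha> * norm p powr (\<alpha> - 1) * (w \<bullet> sgn p))) (at p)"
    using has_derivative_compose[OF has_derivative_norm[OF assms] 
        has_real_derivative_powr[OF \<open>norm p > 0\<close>, unfolded has_field_derivative_def]]
    by (simp add: mult.commute)
  then show ?thesis
    by (rule has_derivative_eq_rhs)
      (use \<open>norm p > 0\<close> in \<open>auto simp: fun_eq_iff sgn_div_norm powr_diff power2_eq_square inner_commute field_simps\<close>)
qed

lemma has_derivative_norm_powr_scaleR_at_0:
  fixes L :: "'a::real_normed_vector \<Rightarrow> 'b::real_normed_vector"
  assumes "bounded_linear L" "0 < \<alpha>"
  shows "((\<lambda>q. norm q powr \<alpha> *\<^sub>R L q) has_derivative (\<lambda>_. 0)) (at 0)"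
proof -
  obtain K where K: "\<And>w. norm (L w) \<le> norm w * K"
    using bounded_linear.bounded[OF assms(1)] by blast
  have bound: "norm (norm h powr \<alpha> *\<^sub>R L h) / norm h \<le> norm h powr \<alpha> * K" for h
  proof (cases "h = 0")
    case False
    have "norm (norm h powr \<alpha> *\<^sub>R L h) / norm h \<le> norm h powr \<alpha> * (norm h * K) / norm h"
      by (intro divide_right_mono) (simp_all add: K mult_left_mono)
    then show ?thesis using False by simp
  qed simp
  have "((\<lambda>h. norm (norm h powr \<alpha> *\<^sub>R L h) / norm h) \<longlongrightarrow> 0) (at (0::'a))"
  proof (rule tendsto_sandwich[OF always_eventually always_eventually tendsto_const])
    show "((\<lambda>h. norm h powr \<alpha> * K) \<longlongrightarrow> 0) (at (0::'a))"
      using assms(2) by (auto intro!: tendsto_mult_left_zero tendsto_zero_powrI tendsto_norm_zero tendsto_ident_at)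
  qed (use bound in auto)
  then show ?thesis
    by (simp add: has_derivative_iff_norm)
qed

lemma has_derivative_norm_powr_scaleR:
  fixes L :: "'a::real_inner \<Rightarrow> 'b::real_normed_vector"
  assumes "bounded_linear L" "0 < \<alpha>"
  shows "((\<lambda>q. norm q powr \<alpha> *\<^sub>R L q) has_derivative
           (\<lambda>w. norm p powr \<alpha> *\<^sub>R L w + (\<alpha> * norm p powr \<alpha> / (norm p)\<^sup>2 * (p \<bullet> w)) *\<^sub>R L p)) (at p)"
proof (cases "p = 0")
  case True
  then show ?thesis
    using has_derivative_norm_powr_scaleR_at_0[OF assms] by simp
next
  case False
  show ?thesis
    using has_derivative_scaleR[OF has_derivative_norm_powr[OF False]
        bounded_linear_imp_has_derivative[OF assms(1)]]
    by (simp add: add.commute)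
qed

lemma bounded_linear_Aop: "bounded_linear (Aop \<gamma> \<beta>)"
  unfolding Aop_def
  by (intro bounded_linear_Pair bounded_linear_minus
        bounded_linear_compose[OF bounded_linear_mult_right bounded_linear_fst]
        bounded_linear_compose[OF bounded_linear_scaleR_right bounded_linear_snd])

text \<open>At \<open>p = 0\<close> the second summand vanishes by division by zero, which matches the
  derivative \<open>0\<close> of \<open>Xfield\<close> at the origin.\<close>

definition Xfield_deriv :: "real \<Rightarrow> real \<Rightarrow> real \<Rightarrow> real \<times> (real^'n) \<Rightarrow> real \<times> (real^'n) \<Rightarrow> real \<times> (real^'n)" where
  "Xfield_deriv \<alpha> \<gamma> \<beta> p w = norm p powr \<alpha> *\<^sub>R Aop \<gamma> \<beta> w
      + (\<alpha> * norm p powr \<alpha> / (norm p)\<^sup>2 * (p \<bullet> w)) *\<^sub>R Aop \<gamma> \<beta> p"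

lemma frechet_derivative_Xfield:
  fixes p :: "real \<times> (real^'n)"
  assumes "0 < \<alpha>"
  shows "frechet_derivative (Xfield \<alpha> \<gamma> \<beta>) (at p) = Xfield_deriv \<alpha> \<gamma> \<beta> p"
  using has_derivative_norm_powr_scaleR[OF bounded_linear_Aop assms, where p=p]
  unfolding Xfield_def[abs_def] Xfield_deriv_def[abs_def]
  by (rule frechet_derivative_at[symmetric])

lemma has_vector_derivative_iff_quotient:
  "(f has_vector_derivative f') (at x within S) \<longleftrightarrow>
    ((\<lambda>y. (f y - f x) /\<^sub>R (y - x)) \<longlongrightarrow> f') (at x within S)"
proof -
  have "norm (f y - f x - (y - x) *\<^sub>R f') / norm (y - x) = norm ((f y - f x) /\<^sub>R (y - x) - f')"
    if "y \<noteq> x" for y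
  proof -
    have "(f y - f x) /\<^sub>R (y - x) - f' = (f y - f x - (y - x) *\<^sub>R f') /\<^sub>R (y - x)"
      using that by (simp add: scaleR_diff_right)
    then show ?thesis by (simp add: divide_inverse_commute)
  qed
  then have "((\<lambda>y. norm (f y - f x - (y - x) *\<^sub>R f') / norm (y - x)) \<longlongrightarrow> 0) (at x within S) \<longleftrightarrow>
      ((\<lambda>y. norm ((f y - f x) /\<^sub>R (y - x) - f')) \<longlongrightarrow> 0) (at x within S)"
    by (intro Lim_cong_within) auto
  then show ?thesis
    by (simp add: has_vector_derivative_def has_derivative_iff_norm bounded_linear_scaleR_left
        tendsto_norm_zero_iff LIM_zero_iff)
qed

lemma has_vector_derivative_fst_snd:
  assumes "(w has_vector_derivative w') F"
  shows "((\<lambda>s. fst (w s)) has_vector_derivative fst w') F"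
    and "((\<lambda>s. snd (w s)) has_vector_derivative snd w') F"
  using has_derivative_fst[OF assms[unfolded has_vector_derivative_def]]
    has_derivative_snd[OF assms[unfolded has_vector_derivative_def]]
  by (simp_all add: has_vector_derivative_def)

lemma has_real_derivative_norm:
  fixes g :: "real \<Rightarrow> 'a::real_inner"
  assumes "(g has_vector_derivative g') (at t within T)" "g t \<noteq> 0"
  shows "((\<lambda>s. norm (g s)) has_real_derivative g' \<bullet> sgn (g t)) (at t within T)"
  using has_derivative_compose[OF assms(1)[unfolded has_vector_derivative_def] has_derivative_norm[OF assms(2)]]
  by (simp add: has_field_derivative_def inner_scaleR_left mult.commute[of _ "g' \<bullet> sgn (g t)"])

lemma tendsto_norm_quotient_at_zero:
  assumes "(g has_vector_derivative g') (at t within T)" "g t = 0"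
  shows "((\<lambda>y. norm (g y) / \<bar>y - t\<bar>) \<longlongrightarrow> norm g') (at t within T)"
  using tendsto_norm[OF assms(1)[unfolded has_vector_derivative_iff_quotient]] assms(2)
  by (simp add: divide_inverse_commute)

lemma has_real_derivative_nonpos_at_right_end_min:
  assumes "(f has_real_derivative D) (at b within {a..b})" "a < b"
    and "\<And>y. y \<in> {a..b} \<Longrightarrow> f b \<le> f y"
  shows "D \<le> 0"
proof -
  have "((\<lambda>y. (f y - f b) / (y - b)) \<longlongrightarrow> D) (at_left b)"
    using assms(1,2) by (simp add: has_field_derivative_iff at_within_Icc_at_left)
  then show ?thesis
  proof (rule tendsto_upperbound)
    show "\<forall>\<^sub>F y in at_left b. (f y - f b) / (y - b) \<le> 0"
      using eventually_at_left_real[OF \<open>a < b\<close>]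
      by eventually_elim (auto intro!: divide_nonneg_neg assms(3))
  qed simp
qed

lemma has_real_derivative_tan_ang:
  fixes w :: "real \<Rightarrow> real \<times> (real^'n)"
  assumes w: "(w has_vector_derivative w') (at t within T)"
    and u: "fst (w t) \<noteq> 0" and S: "snd (w t) \<noteq> 0"
  shows "((\<lambda>s. tan_ang (w s)) has_real_derivative
           (snd w' \<bullet> sgn (snd (w t))) / \<bar>fst (w t)\<bar> - tan_ang (w t) * fst w' / fst (w t)) (at t within T)"
proof -
  have "((\<lambda>s. norm (snd (w s)) / norm (fst (w s))) has_real_derivative
      ((snd w' \<bullet> sgn (snd (w t))) * norm (fst (w t)) - norm (snd (w t)) * (fst w' \<bullet> sgn (fst (w t))))
        / (norm (fst (w t)) * norm (fst (w t)))) (at t within T)"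
    using u S by (intro DERIV_divide has_real_derivative_norm has_vector_derivative_fst_snd[OF w]) auto
  then show ?thesis
    unfolding tan_ang_def[abs_def]
    by (rule DERIV_cong) (use u in \<open>cases "fst (w t) > 0"; auto simp: field_simps\<close>)
qed

text \<open>The right derivative of \<open>s \<mapsto> \<parallel>x + s x'\<parallel>\<close> at \<open>s = 0\<close>.\<close>

definition norm_dir_deriv :: "'a::real_inner \<Rightarrow> 'a \<Rightarrow> real" where
  "norm_dir_deriv x x' = (if x = 0 then norm x' else x' \<bullet> sgn x)"

lemma tendsto_tan_ang_quotient_at_right:
  fixes w :: "real \<Rightarrow> real \<times> (real^'n)"
  assumes "t < b" and w: "(w has_vector_derivative w') (at t within {t..b})"
    and u: "fst (w t) \<noteq> 0" and S: "snd (w t) = 0"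
  shows "((\<lambda>y. tan_ang (w y) / (y - t)) \<longlongrightarrow> norm (snd w') / \<bar>fst (w t)\<bar>) (at_right t)"
proof -
  note F = at_within_Icc_at_right[OF \<open>t < b\<close>]
  have "((\<lambda>y. norm (snd (w y)) / \<bar>y - t\<bar> / norm (fst (w y)))
      \<longlongrightarrow> norm (snd w') / norm (fst (w t))) (at_right t)"
  proof (intro tendsto_divide tendsto_norm)
    show "((\<lambda>y. norm (snd (w y)) / \<bar>y - t\<bar>) \<longlongrightarrow> norm (snd w')) (at_right t)"
      using tendsto_norm_quotient_at_zero[OF has_vector_derivative_fst_snd(2)[OF w]] S
      by (simp add: F)
    show "((\<lambda>y. fst (w y)) \<longlongrightarrow> fst (w t)) (at_right t)"
      using has_vector_derivative_continuous[OF has_vector_derivative_fst_snd(1)[OF w]]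
      by (simp add: continuous_within F)
  qed (use u in simp)
  moreover have "\<forall>\<^sub>F y in at_right t. norm (snd (w y)) / \<bar>y - t\<bar> / norm (fst (w y)) = tan_ang (w y) / (y - t)"
    using eventually_at_right_less[of t] by eventually_elim (simp add: tan_ang_def)
  ultimately show ?thesis
    by (auto elim: Lim_transform_eventually)
qed

lemma tan_ang_deriv_le:
  fixes w :: "real \<Rightarrow> real \<times> (real^'n)"
  assumes "a < b" "t \<in> {a..b}"
    and w: "(w has_vector_derivative w') (at t within {a..b})"
    and u: "fst (w t) \<noteq> 0"
    and D: "((\<lambda>s. tan_ang (w s)) has_real_derivative D) (at t within {a..b})"
  shows "D \<le> norm_dir_deriv (snd (w t)) (snd w') / \<bar>fst (w t)\<bar> - tan_ang (w t) * fst w' / fst (w t)"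
proof (cases "snd (w t) = 0")
  case False
  have "at t within {a..b} \<noteq> bot"
    using assms(1,2) by (simp add: trivial_limit_within)
  with D has_real_derivative_tan_ang[OF w u False] show ?thesis
    by (metis has_field_derivative_unique norm_dir_deriv_def False order.refl)
next
  case S: True
  then have tan0: "tan_ang (w t) = 0"
    by (simp add: tan_ang_def)
  have "D \<le> norm (snd w') / \<bar>fst (w t)\<bar>"
  proof (cases "t = b")
    case True
    have "D \<le> 0"
      using has_real_derivative_nonpos_at_right_end_min[OF D[unfolded True] assms(1)] S
      by (simp add: True tan_ang_def)
    then show ?thesis
      by (simp add: order_trans[OF _ divide_nonneg_nonneg])
  next
    case False
    then have "t < b" using assms(2) by simp
    have "{t..b} \<subseteq> {a..b}" using assms(2) by auto
    have "((\<lambda>y. tan_ang (w y) / (y - t)) \<longlongrightarrow> D) (at_right t)"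
      using has_field_derivative_subset[OF D \<open>{t..b} \<subseteq> {a..b}\<close>]
      by (simp add: has_field_derivative_iff at_within_Icc_at_right[OF \<open>t < b\<close>] tan0)
    with tendsto_tan_ang_quotient_at_right[OF \<open>t < b\<close> has_vector_derivative_within_subset[OF w
          \<open>{t..b} \<subseteq> {a..b}\<close>] u S]
    show ?thesis
      using tendsto_unique[OF trivial_limit_at_right_real] by fastforce
  qed
  then show ?thesis
    by (simp add: tan0 norm_dir_deriv_def S)
qed

lemma tan_ang_div_one_plus_sq:
  "tan_ang p / (1 + (tan_ang p)\<^sup>2) = \<bar>fst p\<bar> * norm (snd p) / (norm p)\<^sup>2"
proof (cases "fst p = 0")
  case False
  have "(norm p)\<^sup>2 = (fst p)\<^sup>2 + (norm (snd p))\<^sup>2"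
    by (simp add: norm_prod_def)
  with False show ?thesis
    unfolding tan_ang_def by (cases "fst p > 0") (auto simp: field_simps power2_eq_square)
qed (simp add: tan_ang_def)

lemma neg_product_le:
  fixes a e \<tau> B \<beta> \<gamma> :: real
  assumes "0 < \<tau>" "\<tau> \<le> 1" "\<bar>e\<bar> \<le> B" "0 < \<beta>" "0 < \<gamma>"
  shows "- ((a + \<tau> * e) * (\<beta> * e + \<gamma> * \<tau> * a)) \<le> (\<beta> + \<gamma>) * (\<bar>a\<bar> * B)"
proof -
  have "- (a * e) \<le> \<bar>a\<bar> * B"
    using abs_ge_minus_self[of "a * e"] mult_left_mono[OF assms(3) abs_ge_zero[of a]]
    by (simp add: abs_mult)
  then have "- (a * e) * (\<beta> + \<gamma> * \<tau>\<^sup>2) \<le> \<bar>a\<bar> * B * (\<beta> + \<gamma>)"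
    using assms by (intro mult_mono) (auto simp: power_le_one)
  moreover have "(a + \<tau> * e) * (\<beta> * e + \<gamma> * \<tau> * a)
      = a * e * (\<beta> + \<gamma> * \<tau>\<^sup>2) + \<gamma> * \<tau> * a\<^sup>2 + \<beta> * \<tau> * e\<^sup>2"
    by (simp add: algebra_simps power2_eq_square)
  moreover have "0 \<le> \<gamma> * \<tau> * a\<^sup>2" "0 \<le> \<beta> * \<tau> * e\<^sup>2"
    using assms by auto
  ultimately show ?thesis
    by (simp add: algebra_simps)
qed

lemma tan_rate_le_coordinates:
  fixes a v c \<sigma> B \<beta> \<gamma> K P :: real
  assumes "0 < \<sigma>" "\<sigma> \<le> \<bar>v\<bar>" "\<bar>c\<bar> \<le> \<sigma> * B" "0 < \<beta>" "0 < \<gamma>" "0 \<le> K"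
  shows "(- (P * \<beta>) * \<sigma>\<^sup>2 - K * (a * v + c) * \<beta> * c) / \<sigma> / \<bar>v\<bar>
           - \<sigma> / \<bar>v\<bar> * (P * \<gamma> * v + K * (a * v + c) * \<gamma> * a) / v
         \<le> - (\<beta> + \<gamma>) * P * (\<sigma> / \<bar>v\<bar>) + K * ((\<beta> + \<gamma>) * (\<bar>a\<bar> * B))"
proof -
  define \<tau> where "\<tau> = \<sigma> / \<bar>v\<bar>"
  define e where "e = c / \<sigma> * sgn v"
  have "v \<noteq> 0" using assms(1,2) by auto
  have "0 < \<tau>" "\<tau> \<le> 1" using assms(1,2) \<open>v \<noteq> 0\<close> by (simp_all add: \<tau>_def)
  have "\<bar>e\<bar> \<le> B"
    using assms(1,3) \<open>v \<noteq> 0\<close> by (simp add: e_def abs_mult divide_le_eq mult.commute)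
  have "(- (P * \<beta>) * \<sigma>\<^sup>2 - K * (a * v + c) * \<beta> * c) / \<sigma> / \<bar>v\<bar>
           - \<sigma> / \<bar>v\<bar> * (P * \<gamma> * v + K * (a * v + c) * \<gamma> * a) / v
        = - (\<beta> + \<gamma>) * P * \<tau> - K * ((a + \<tau> * e) * (\<beta> * e + \<gamma> * \<tau> * a))"
    using assms(1) \<open>v \<noteq> 0\<close> unfolding \<tau>_def e_def
    by (cases "v > 0") (auto simp: field_simps power2_eq_square)
  moreover have "- K * ((a + \<tau> * e) * (\<beta> * e + \<gamma> * \<tau> * a)) \<le> K * ((\<beta> + \<gamma>) * (\<bar>a\<bar> * B))"
    using mult_left_mono[OF neg_product_le[OF \<open>0 < \<tau>\<close> \<open>\<tau> \<le> 1\<close> \<open>\<bar>e\<bar> \<le> B\<close> assms(4,5)] assms(6)]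
    by simp
  ultimately show ?thesis
    by (simp add: \<tau>_def)
qed

lemma Xfield_deriv_tan_rate_le:
  fixes p w :: "real \<times> (real^'n)"
  assumes "0 \<le> \<alpha>" "0 < \<beta>" "0 < \<gamma>" and u: "fst w \<noteq> 0" and tan_le: "tan_ang w \<le> 1"
  defines "w' \<equiv> Xfield_deriv \<alpha> \<gamma> \<beta> p w"
  shows "norm_dir_deriv (snd w) (snd w') / \<bar>fst w\<bar> - tan_ang w * fst w' / fst w
    \<le> - (\<beta> + \<gamma>) * norm p powr \<alpha> * tan_ang w
       + \<alpha> * (\<beta> + \<gamma>) * norm p powr \<alpha> * (tan_ang p / (1 + (tan_ang p)\<^sup>2))"
proof -
  define P where "P = norm p powr \<alpha>"
  define K where "K = \<alpha> * P / (norm p)\<^sup>2"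
  obtain a b where p: "fst p = a" "snd p = b" by fastforce
  obtain v S where w: "fst w = v" "snd w = S" by fastforce
  define m where "m = a * v + S \<bullet> b"
  have "p \<bullet> w = m"
    by (simp add: inner_prod_def m_def p w inner_commute)
  have tan_w: "tan_ang w = norm S / \<bar>v\<bar>"
    by (simp add: tan_ang_def w)
  have "0 \<le> K" using assms(1) by (simp add: K_def P_def)
  have fst_w': "fst w' = P * \<gamma> * v + K * m * \<gamma> * a"
    by (simp add: w'_def Xfield_deriv_def Aop_def p w \<open>p \<bullet> w = m\<close> K_def P_def)
  have snd_w': "snd w' = - ((P * \<beta>) *\<^sub>R S) - (K * m * \<beta>) *\<^sub>R b"
    by (simp add: w'_def Xfield_deriv_def Aop_def p w \<open>p \<bullet> w = m\<close> K_def P_def)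
  have rhs: "- (\<beta> + \<gamma>) * norm p powr \<alpha> * tan_ang w
       + \<alpha> * (\<beta> + \<gamma>) * norm p powr \<alpha> * (tan_ang p / (1 + (tan_ang p)\<^sup>2))
     = - (\<beta> + \<gamma>) * P * tan_ang w + K * ((\<beta> + \<gamma>) * (\<bar>a\<bar> * norm b))"
    by (simp add: tan_ang_div_one_plus_sq p K_def P_def)
  show ?thesis
  proof (cases "S = 0")
    case True
    have "norm (snd w') / \<bar>v\<bar> = K * \<beta> * (\<bar>a\<bar> * norm b)"
      using u \<open>0 \<le> K\<close> assms(2) by (simp add: snd_w' True m_def w abs_mult)
    also have "\<dots> \<le> K * ((\<beta> + \<gamma>) * (\<bar>a\<bar> * norm b))"
      using \<open>0 \<le> K\<close> assms(3) by (simp add: algebra_simps)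
    finally show ?thesis
      unfolding rhs by (simp add: norm_dir_deriv_def tan_w w True)
  next
    case False
    then have "0 < norm S" by simp
    have "norm_dir_deriv (snd w) (snd w') = (- (P * \<beta>) * (norm S)\<^sup>2 - K * m * \<beta> * (S \<bullet> b)) / norm S"
      using False unfolding snd_w' norm_dir_deriv_def w
      by (simp add: sgn_div_norm inner_diff_left power2_norm_eq_inner inner_commute[of b] field_simps)
    moreover have "norm S \<le> \<bar>v\<bar>"
      using tan_le u by (simp add: tan_w w divide_le_eq)
    ultimately show ?thesis
      using tan_rate_le_coordinates[OF \<open>0 < norm S\<close> _ Cauchy_Schwarz_ineq2 assms(2,3) \<open>0 \<le> K\<close>, of v P a]
      unfolding rhs by (simp add: w tan_w fst_w' m_def)
  qed
qed

theorem lemma7p7: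
  fixes \<alpha> \<gamma> \<beta> r0 T0 t D :: real
    and x v :: "real \<Rightarrow> real \<times> (real^'n)"
  assumes "0 < \<alpha>" "\<alpha> < 1" "0 < \<gamma>" "0 < \<beta>" "0 < r0" "0 < T0"
    and traj: "\<And>s. s \<in> {0..T0} \<Longrightarrow>
        (x has_vector_derivative Xfield \<alpha> \<gamma> \<beta> (x s)) (at s within {0..T0})"
    and inY: "\<And>s. s \<in> {0..T0} \<Longrightarrow> x s \<in> ball 0 r0"
    and var: "\<And>s. s \<in> {0..T0} \<Longrightarrow>
        (v has_vector_derivative frechet_derivative (Xfield \<alpha> \<gamma> \<beta>) (at (x s)) (v s))
          (at s within {0..T0})"
    and t: "t \<in> {0..T0}"
    and vu: "fst (v t) \<noteq> 0"
    and tanle: "tan_ang (v t) \<le> 1"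
    and deriv: "((\<lambda>s. tan_ang (v s)) has_real_derivative D) (at t within {0..T0})"
  shows "D \<le> - (\<beta> + \<gamma>) * norm (x t) powr \<alpha> * tan_ang (v t)
              + \<alpha> * (\<beta> + \<gamma>) * norm (x t) powr \<alpha>
                  * (tan_ang (x t) / (1 + (tan_ang (x t))\<^sup>2))"
proof -
  let ?v' = "Xfield_deriv \<alpha> \<gamma> \<beta> (x t) (v t)"
  have "(v has_vector_derivative ?v') (at t within {0..T0})"
    using var[OF t] by (simp add: frechet_derivative_Xfield[OF \<open>0 < \<alpha>\<close>])
  then have "D \<le> norm_dir_deriv (snd (v t)) (snd ?v') / \<bar>fst (v t)\<bar> - tan_ang (v t) * fst ?v' / fst (v t)"
    using tan_ang_deriv_le[OF \<open>0 < T0\<close> t _ vu deriv] by blast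
  also have "\<dots> \<le> - (\<beta> + \<gamma>) * norm (x t) powr \<alpha> * tan_ang (v t)
              + \<alpha> * (\<beta> + \<gamma>) * norm (x t) powr \<alpha> * (tan_ang (x t) / (1 + (tan_ang (x t))\<^sup>2))"
    using Xfield_deriv_tan_rate_le[of \<alpha> \<beta> \<gamma> "v t" "x t"] assms(1,3,4) vu tanle by simp
  finally show ?thesis .
qed

end
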